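(* Let $m\ge 1$ and let $G$ be the complement of the path graph $P_{2m}$, i.e., the simple graph on vertices $\{1,\dots,2m\}$ in which distinct vertices $i,j$ are adjacent if and only if $|i-j|\ge 2$. Then the number of perfect matchings of $G$ equals $$\sum_{k=0}^{m}(-1)^{m-k}\frac{(m+k)!}{k!\,(m-k)!\,2^{k}}.$$
   Context: A perfect matching of a graph on $2m$ vertices is a set of $m$ edges, no two of which share a vertex. *)

theory Defs
  imports Complex_Main
begin

definition path_complement_edges :: "nat \<Rightarrow> nat set set" where
  "path_complement_edges m =
     {{i, j} | i j. i \<in> {1..2*m} \<and> j \<in> {1..2*m} \<and> i \<noteq> j \<and> 2 \<le> \<bar>int i - int j\<bar>}"

definition perfect_matching :: "'a set \<Rightarrow> 'a set set \<Rightarrow> 'a set set \<Rightarrow> bool" where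
  "perfect_matching V E M \<longleftrightarrow>
     M \<subseteq> E \<and>
     (\<forall>e\<in>M. \<forall>f\<in>M. e \<noteq> f \<longrightarrow> e \<inter> f = {}) \<and>
     \<Union>M = V"

end

theory Submission
  imports Defs
begin

text \<open>Scan the vertices 1, 2, ... in order. Each vertex is either matched to an earlier
  \<^emph>\<open>open\<close> vertex (one that was left waiting for a later partner), which may be any open
  vertex except its path predecessor, or it becomes open itself. Hence the number of
  completions depends only on the number \<open>a\<close> of open vertices, on whether the
  predecessor is open, and on the number \<open>r\<close> of vertices still to come. For a predecessor
  that is not open, this count \<open>G a r\<close> satisfies
  \<open>G a (r + 2) = a G (a - 1) (r + 1) + G (a + 1) (r + 1) - G a r\<close>, a recurrence that the
  alternating sum also obeys; the theorem is the case \<open>a = 0\<close>, \<open>r = 2m\<close>.\<close>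

definition adj_edges :: "'a set \<Rightarrow> ('a \<Rightarrow> 'a \<Rightarrow> bool) \<Rightarrow> 'a set set" where
  "adj_edges V P = {{x, y} | x y. x \<in> V \<and> y \<in> V \<and> x \<noteq> y \<and> P x y}"

definition perfect_matching_count :: "'a set \<Rightarrow> ('a \<Rightarrow> 'a \<Rightarrow> bool) \<Rightarrow> nat" where
  "perfect_matching_count V P = card {M. perfect_matching V (adj_edges V P) M}"

lemma finite_perfect_matchings:
  assumes "finite V"
  shows "finite {M. perfect_matching V (adj_edges V P) M}"
proof (rule finite_subset)
  show "{M. perfect_matching V (adj_edges V P) M} \<subseteq> Pow (Pow V)"
    unfolding perfect_matching_def adj_edges_def by auto
qed (use assms in simp)

lemma perfect_matching_count_empty [simp]: "perfect_matching_count {} P = 1"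
proof -
  have "{M. perfect_matching {} (adj_edges {} P) M} = {{}}"
    unfolding perfect_matching_def adj_edges_def by auto
  then show ?thesis unfolding perfect_matching_count_def by simp
qed

lemma perfect_matching_count_cong:
  assumes "\<And>x y. x \<in> V \<Longrightarrow> y \<in> V \<Longrightarrow> P x y = Q x y"
  shows "perfect_matching_count V P = perfect_matching_count V Q"
proof -
  have "adj_edges V P = adj_edges V Q" unfolding adj_edges_def using assms by blast
  then show ?thesis unfolding perfect_matching_count_def by simp
qed

lemma perfect_matching_adj_edges_restrict:
  assumes "W \<subseteq> V"
  shows "perfect_matching W (adj_edges V P) N \<longleftrightarrow> perfect_matching W (adj_edges W P) N"
proof -
  have "N \<subseteq> adj_edges V P \<longleftrightarrow> N \<subseteq> adj_edges W P" if "\<Union>N = W"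
  proof -
    have "e \<in> adj_edges V P \<longleftrightarrow> e \<in> adj_edges W P" if "e \<subseteq> W" for e
      using that assms unfolding adj_edges_def by auto
    with \<open>\<Union>N = W\<close> show ?thesis by blast
  qed
  then show ?thesis unfolding perfect_matching_def by blast
qed

lemma perfect_matching_insert:
  assumes "e \<subseteq> V" "e \<notin> N"
  shows "perfect_matching V E (insert e N) \<longleftrightarrow> e \<in> E \<and> perfect_matching (V - e) E N"
proof
  assume pm: "perfect_matching V E (insert e N)"
  then have disj: "\<forall>f\<in>N. f \<inter> e = {}"
    using assms(2) unfolding perfect_matching_def by (metis insertCI)
  have "\<Union>N = V - e"
    using pm disj unfolding perfect_matching_def by auto
  with pm show "e \<in> E \<and> perfect_matching (V - e) E N"
    unfolding perfect_matching_def by (simp add: insert_subset)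
next
  assume "e \<in> E \<and> perfect_matching (V - e) E N"
  with assms(1) show "perfect_matching V E (insert e N)"
    unfolding perfect_matching_def by auto
qed

lemma card_perfect_matchings_containing:
  assumes "x \<in> V" "y \<in> V" "x \<noteq> y" "P x y"
  shows "card {M. perfect_matching V (adj_edges V P) M \<and> {x, y} \<in> M}
    = perfect_matching_count (V - {x, y}) P"
proof -
  let ?e = "{x, y}"
  let ?N = "{N. perfect_matching (V - ?e) (adj_edges (V - ?e) P) N}"
  have e_edge: "?e \<in> adj_edges V P"
    using assms unfolding adj_edges_def by blast
  have e_notin: "?e \<notin> N" if "N \<in> ?N" for N
  proof
    assume "?e \<in> N"
    then have "x \<in> \<Union>N" by blast
    with that show False unfolding perfect_matching_def by simp
  qed
  have pm_insert: "perfect_matching V (adj_edges V P) (insert ?e N) \<longleftrightarrow> N \<in> ?N" if "?e \<notin> N" for N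
  proof -
    have "?e \<subseteq> V" "V - ?e \<subseteq> V" using assms(1,2) by auto
    then show ?thesis
      using perfect_matching_insert[OF _ that] perfect_matching_adj_edges_restrict e_edge
      by (simp only: mem_Collect_eq simp_thms)
  qed
  have "{M. perfect_matching V (adj_edges V P) M \<and> ?e \<in> M} = insert ?e ` ?N"
  proof (intro equalityI subsetI)
    fix M assume "M \<in> {M. perfect_matching V (adj_edges V P) M \<and> ?e \<in> M}"
    then have M: "perfect_matching V (adj_edges V P) M" "?e \<in> M" by simp_all
    then have "M = insert ?e (M - {?e})" by auto
    moreover have "M - {?e} \<in> ?N"
      using pm_insert[of "M - {?e}"] M calculation by simp
    ultimately show "M \<in> insert ?e ` ?N" by (rule image_eqI)
  next
    fix M assume "M \<in> insert ?e ` ?N"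
    then obtain N where N: "N \<in> ?N" and "M = insert ?e N" by blast
    with pm_insert[OF e_notin[OF N]]
    show "M \<in> {M. perfect_matching V (adj_edges V P) M \<and> ?e \<in> M}" by simp
  qed
  moreover have "inj_on (insert ?e) ?N"
    using e_notin by (intro inj_onI) (metis insert_ident)
  ultimately show ?thesis
    unfolding perfect_matching_count_def by (simp add: card_image)
qed

lemma perfect_matching_count_expand:
  assumes "finite V" "x \<in> V" "symp P"
  shows "perfect_matching_count V P
    = (\<Sum>y | y \<in> V \<and> y \<noteq> x \<and> P x y. perfect_matching_count (V - {x, y}) P)"
proof -
  let ?Y = "{y. y \<in> V \<and> y \<noteq> x \<and> P x y}"
  let ?A = "\<lambda>y. {M. perfect_matching V (adj_edges V P) M \<and> {x, y} \<in> M}"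
  have cover: "{M. perfect_matching V (adj_edges V P) M} = (\<Union>y\<in>?Y. ?A y)"
  proof (intro equalityI subsetI)
    fix M assume "M \<in> {M. perfect_matching V (adj_edges V P) M}"
    then have M: "M \<subseteq> adj_edges V P" "\<Union>M = V" "perfect_matching V (adj_edges V P) M"
      unfolding perfect_matching_def by auto
    then obtain e where "e \<in> M" "x \<in> e" using assms(2) by blast
    with M(1) obtain a b where "e = {a, b}" "a \<in> V" "b \<in> V" "a \<noteq> b" "P a b"
      unfolding adj_edges_def by blast
    then obtain y where "e = {x, y}" "y \<in> ?Y"
      using \<open>x \<in> e\<close> assms(3) by (auto dest: sympD)
    with \<open>e \<in> M\<close> M(3) show "M \<in> (\<Union>y\<in>?Y. ?A y)" by blast
  qed auto
  have disjoint: "?A y \<inter> ?A z = {}" if "y \<noteq> z" for y z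
  proof (rule ccontr)
    assume "?A y \<inter> ?A z \<noteq> {}"
    then obtain M where "perfect_matching V (adj_edges V P) M" "{x, y} \<in> M" "{x, z} \<in> M"
      by blast
    with that have "{x, y} \<inter> {x, z} = {}"
      unfolding perfect_matching_def by (metis doubleton_eq_iff)
    then show False by blast
  qed
  have "card {M. perfect_matching V (adj_edges V P) M} = (\<Sum>y\<in>?Y. card (?A y))"
    unfolding cover
  proof (rule card_UN_disjoint)
    show "\<forall>y\<in>?Y. finite (?A y)"
      using finite_perfect_matchings[OF assms(1), of P] by auto
  qed (use assms(1) disjoint in auto)
  also have "\<dots> = (\<Sum>y\<in>?Y. perfect_matching_count (V - {x, y}) P)"
    using assms(2) by (intro sum.cong refl card_perfect_matchings_containing) auto
  finally show ?thesis unfolding perfect_matching_count_def .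
qed

text \<open>Adjacency in the complement of the path once the vertices in \<open>Q\<close> are open: two open
  vertices may not be matched to each other, since both wait for later partners.\<close>

definition open_adj :: "nat set \<Rightarrow> nat \<Rightarrow> nat \<Rightarrow> bool" where
  "open_adj Q x y \<longleftrightarrow> 2 \<le> \<bar>int x - int y\<bar> \<and> \<not> (x \<in> Q \<and> y \<in> Q)"

lemma symp_open_adj: "symp (open_adj Q)"
  unfolding open_adj_def by (auto intro: sympI)

lemma perfect_matching_count_open_step:
  assumes "finite Q" "Q \<subseteq> {..<i}"
  shows "perfect_matching_count (Q \<union> {i..<i + Suc r}) (open_adj Q) =
    (\<Sum>y\<in>Q - {i - 1}. perfect_matching_count ((Q - {y}) \<union> {Suc i..<Suc i + r}) (open_adj (Q - {y})))
    + perfect_matching_count (insert i Q \<union> {Suc i..<Suc i + r}) (open_adj (insert i Q))"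
proof -
  let ?V = "Q \<union> {i..<i + Suc r}"
  let ?later = "{i + 2..<i + Suc r}"
  have fin: "finite ?V" "finite (Q - {i - 1})" "finite ?later" using assms(1) by auto
  have i_notin: "i \<notin> Q" using assms(2) by auto
  have V_eq: "insert i Q \<union> {Suc i..<Suc i + r} = ?V" by auto
  have "{y. y \<in> ?V \<and> y \<noteq> i \<and> open_adj Q i y} = (Q - {i - 1}) \<union> ?later"
    using i_notin assms(2) unfolding open_adj_def by force
  then have "perfect_matching_count ?V (open_adj Q)
      = (\<Sum>y\<in>(Q - {i - 1}) \<union> ?later. perfect_matching_count (?V - {i, y}) (open_adj Q))"
    using perfect_matching_count_expand[OF fin(1) _ symp_open_adj, of i Q] by simp
  also have "\<dots> = (\<Sum>y\<in>Q - {i - 1}. perfect_matching_count (?V - {i, y}) (open_adj Q))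
      + (\<Sum>y\<in>?later. perfect_matching_count (?V - {i, y}) (open_adj Q))"
    by (rule sum.union_disjoint[OF fin(2,3)]) (use assms(2) in auto)
  also have "(\<Sum>y\<in>Q - {i - 1}. perfect_matching_count (?V - {i, y}) (open_adj Q))
      = (\<Sum>y\<in>Q - {i - 1}.
          perfect_matching_count ((Q - {y}) \<union> {Suc i..<Suc i + r}) (open_adj (Q - {y})))"
  proof (intro sum.cong refl)
    fix y assume "y \<in> Q - {i - 1}"
    then have V_eq: "?V - {i, y} = (Q - {y}) \<union> {Suc i..<Suc i + r}" using i_notin assms(2) by auto
    show "perfect_matching_count (?V - {i, y}) (open_adj Q)
      = perfect_matching_count ((Q - {y}) \<union> {Suc i..<Suc i + r}) (open_adj (Q - {y}))"
      unfolding V_eq by (rule perfect_matching_count_cong) (auto simp: open_adj_def dest: subsetD[OF assms(2)])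
  qed
  also have "(\<Sum>y\<in>?later. perfect_matching_count (?V - {i, y}) (open_adj Q))
      = perfect_matching_count (insert i Q \<union> {Suc i..<Suc i + r}) (open_adj (insert i Q))"
  proof -
    have "{y. y \<in> ?V \<and> y \<noteq> i \<and> open_adj (insert i Q) i y} = ?later"
      using assms(2) unfolding open_adj_def by force
    then have "perfect_matching_count ?V (open_adj (insert i Q))
        = (\<Sum>y\<in>?later. perfect_matching_count (?V - {i, y}) (open_adj (insert i Q)))"
      using perfect_matching_count_expand[OF fin(1) _ symp_open_adj, of i "insert i Q"] by simp
    also have "\<dots> = (\<Sum>y\<in>?later. perfect_matching_count (?V - {i, y}) (open_adj Q))"
      by (intro sum.cong refl perfect_matching_count_cong) (simp add: open_adj_def)
    finally show ?thesis unfolding V_eq by simp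
  qed
  finally show ?thesis .
qed

text \<open>\<open>open_matchings a p r\<close>: \<open>a\<close> open vertices, \<open>p\<close> tells whether the last scanned vertex is
  open, \<open>r\<close> vertices remain.\<close>

fun open_matchings :: "nat \<Rightarrow> bool \<Rightarrow> nat \<Rightarrow> nat" where
  "open_matchings a p 0 = (if a = 0 then 1 else 0)"
| "open_matchings a p (Suc r) =
     (a - of_bool p) * open_matchings (a - 1) False r + open_matchings (Suc a) True r"

lemma perfect_matching_count_open:
  assumes "finite Q" "Q \<subseteq> {..<i}"
  shows "perfect_matching_count (Q \<union> {i..<i + r}) (open_adj Q) = open_matchings (card Q) (i - 1 \<in> Q) r"
  using assms
proof (induction r arbitrary: Q i)
  case 0
  show ?case
  proof (cases "Q = {}")
    case False
    then obtain x where "x \<in> Q" by blast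
    moreover have "{y. y \<in> Q \<and> y \<noteq> x \<and> open_adj Q x y} = {}"
      using \<open>x \<in> Q\<close> unfolding open_adj_def by blast
    ultimately have "perfect_matching_count Q (open_adj Q) = 0"
      using perfect_matching_count_expand[OF "0.prems"(1) _ symp_open_adj] by (simp only: sum.empty)
    with False "0.prems"(1) show ?thesis by simp
  qed simp
next
  case (Suc r)
  have i_notin: "i \<notin> Q" and sub: "insert i Q \<subseteq> {..<Suc i}" using Suc.prems(2) by auto
  have "perfect_matching_count ((Q - {y}) \<union> {Suc i..<Suc i + r}) (open_adj (Q - {y}))
      = open_matchings (card Q - 1) False r" if "y \<in> Q" for y
    using Suc.IH[of "Q - {y}" "Suc i"] Suc.prems(1) sub that i_notin by auto
  moreover have "perfect_matching_count (insert i Q \<union> {Suc i..<Suc i + r}) (open_adj (insert i Q))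
      = open_matchings (Suc (card Q)) True r"
    using Suc.IH[of "insert i Q" "Suc i"] Suc.prems(1) sub i_notin by auto
  moreover have "card (Q - {i - 1}) = card Q - of_bool (i - 1 \<in> Q)"
    by (simp add: card_Diff_singleton_if)
  ultimately show ?case
    using perfect_matching_count_open_step[OF Suc.prems] by simp
qed

lemma open_matchings_eq_0: "r < a \<Longrightarrow> open_matchings a p r = 0"
  by (induction r arbitrary: a p) auto

lemma open_matchings_diag: "open_matchings a False a = fact a"
  by (induction a) (simp_all add: open_matchings_eq_0)

text \<open>The states with an open predecessor are eliminated via
  \<open>open_matchings (a + 1) True (r + 1) + open_matchings a False r
    = open_matchings (a + 1) False (r + 1)\<close>.\<close>

lemma open_matchings_recurrence:
  "real (open_matchings a False (Suc (Suc r)))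
    = real a * real (open_matchings (a - 1) False (Suc r))
      + real (open_matchings (Suc a) False (Suc r)) - real (open_matchings a False r)"
  by simp

definition open_matchings_closed :: "nat \<Rightarrow> nat \<Rightarrow> real" where
  "open_matchings_closed a T =
     (\<Sum>j=0..T. (-1) ^ j * fact (a + 2 * T - j) / (fact j * fact (T - j) * 2 ^ (T - j)))"

lemma open_matchings_closed_recurrence:
  "open_matchings_closed a (Suc S)
    = real a * open_matchings_closed (a - 1) (Suc S)
      + open_matchings_closed (Suc a) S - open_matchings_closed a S"
proof -
  define X where "X j = (-1) ^ j * fact (a + 2 * Suc S - 1 - j)
    / (fact j * fact (Suc S - j) * 2 ^ (Suc S - j) :: real)" for j
  have split: "(-1) ^ j * fact (a + 2 * Suc S - j) / (fact j * fact (Suc S - j) * 2 ^ (Suc S - j))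
      = real a * X j + 2 * real (Suc S - j) * X j + real j * X j" if "j \<le> Suc S" for j
  proof -
    have "a + 2 * Suc S - j > 0" using that by simp
    then have "fact (a + 2 * Suc S - j) = real (a + 2 * Suc S - j) * fact (a + 2 * Suc S - j - 1)"
      by (rule fact_reduce)
    also have "a + 2 * Suc S - j - 1 = a + 2 * Suc S - 1 - j" by simp
    also have "real (a + 2 * Suc S - j) = real a + 2 * real (Suc S - j) + real j"
      using that by (simp add: of_nat_diff)
    finally show ?thesis unfolding X_def by (simp add: field_simps)
  qed
  have a_part: "real a * open_matchings_closed (a - 1) (Suc S) = real a * (\<Sum>j=0..Suc S. X j)"
  proof (cases "a = 0")
    case False
    then have "a - 1 + 2 * Suc S - j = a + 2 * Suc S - 1 - j" for j by simp
    then show ?thesis unfolding open_matchings_closed_def X_def by simp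
  qed simp
  have open_part: "(\<Sum>j=0..Suc S. 2 * real (Suc S - j) * X j) = open_matchings_closed (Suc a) S"
  proof -
    have "(\<Sum>j=0..Suc S. 2 * real (Suc S - j) * X j) = (\<Sum>j=0..S. 2 * real (Suc S - j) * X j)"
      by simp
    also have "\<dots> = open_matchings_closed (Suc a) S"
      unfolding open_matchings_closed_def
    proof (intro sum.cong refl)
      fix j assume "j \<in> {0..S}"
      then have "Suc S - j = Suc (S - j)" "a + 2 * Suc S - 1 - j = Suc a + 2 * S - j" by auto
      then show "2 * real (Suc S - j) * X j
        = (-1) ^ j * fact (Suc a + 2 * S - j) / (fact j * fact (S - j) * 2 ^ (S - j))"
        unfolding X_def by (simp add: field_simps del: of_nat_Suc)
    qed
    finally show ?thesis .
  qed
  have matched_part: "(\<Sum>j=0..Suc S. real j * X j) = - open_matchings_closed a S"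
  proof -
    have "(\<Sum>j=0..Suc S. real j * X j) = (\<Sum>j=0..S. real (Suc j) * X (Suc j))"
      by (subst sum.atLeast0_atMost_Suc_shift) simp
    also have "\<dots> = - open_matchings_closed a S"
      unfolding open_matchings_closed_def sum_negf[symmetric]
    proof (intro sum.cong refl)
      fix j assume "j \<in> {0..S}"
      have "a + 2 * Suc S - 1 - Suc j = a + 2 * S - j" by simp
      then show "real (Suc j) * X (Suc j)
        = - ((-1) ^ j * fact (a + 2 * S - j) / (fact j * fact (S - j) * 2 ^ (S - j)))"
        unfolding X_def by (simp add: field_simps del: of_nat_Suc)
    qed
    finally show ?thesis .
  qed
  have "open_matchings_closed a (Suc S)
      = (\<Sum>j=0..Suc S. real a * X j + 2 * real (Suc S - j) * X j + real j * X j)"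
    unfolding open_matchings_closed_def by (intro sum.cong refl split) simp
  also have "\<dots> = real a * (\<Sum>j=0..Suc S. X j) + (\<Sum>j=0..Suc S. 2 * real (Suc S - j) * X j)
      + (\<Sum>j=0..Suc S. real j * X j)"
    by (simp only: sum.distrib sum_distrib_left)
  finally show ?thesis
    unfolding a_part open_part matched_part by simp
qed

lemma open_matchings_eq_closed:
  "real (open_matchings a False (a + 2 * T)) = open_matchings_closed a T"
proof (induction T arbitrary: a)
  case 0
  show ?case by (simp add: open_matchings_diag open_matchings_closed_def)
next
  case (Suc S)
  note shorter = Suc.IH
  show ?case
  proof (induction a)
    case 0
    have "real (open_matchings 0 False (0 + 2 * Suc S))
        = real (open_matchings 1 False (1 + 2 * S)) - real (open_matchings 0 False (0 + 2 * S))"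
      using open_matchings_recurrence[of 0 "2 * S"] by simp
    then show ?case
      using open_matchings_closed_recurrence[of 0 S] by (simp only: shorter) simp
  next
    case (Suc a)
    have "real (open_matchings (Suc a) False (Suc a + 2 * Suc S))
        = real (Suc a) * real (open_matchings a False (a + 2 * Suc S))
          + real (open_matchings (Suc (Suc a)) False (Suc (Suc a) + 2 * S))
          - real (open_matchings (Suc a) False (Suc a + 2 * S))"
      using open_matchings_recurrence[of "Suc a" "Suc a + 2 * S"] by simp
    then show ?case
      using open_matchings_closed_recurrence[of "Suc a" S] by (simp only: Suc.IH shorter) simp
  qed
qed

lemma card_perfect_matchings_path_complement:
  "card {M. perfect_matching {1..2 * m} (path_complement_edges m) M} = open_matchings 0 False (2 * m)"
proof -
  have "path_complement_edges m = adj_edges {1..2 * m} (open_adj {})"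
    unfolding path_complement_edges_def adj_edges_def open_adj_def by simp
  moreover have "perfect_matching_count ({} \<union> {1..<1 + 2 * m}) (open_adj {})
      = open_matchings 0 False (2 * m)"
    using perfect_matching_count_open[of "{}" 1 "2 * m"] by simp
  moreover have "{} \<union> {1..<1 + 2 * m} = {1..2 * m}" by auto
  ultimately show ?thesis unfolding perfect_matching_count_def by simp
qed

lemma open_matchings_closed_0:
  "open_matchings_closed 0 m = (\<Sum>k=0..m. (-1) ^ (m - k) * fact (m + k) / (fact k * fact (m - k) * 2 ^ k))"
proof -
  have "open_matchings_closed 0 m
      = (\<Sum>k=0..m. (-1) ^ (m - k) * fact (2 * m - (m - k))
          / (fact (m - k) * fact (m - (m - k)) * 2 ^ (m - (m - k))))"
    unfolding open_matchings_closed_def add_0 by (rule sum.atLeastAtMost_rev[where n = 0, simplified])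
  also have "\<dots> = (\<Sum>k=0..m. (-1) ^ (m - k) * fact (m + k) / (fact k * fact (m - k) * 2 ^ k))"
    by (intro sum.cong refl) (auto simp: mult.commute)
  finally show ?thesis .
qed

theorem mainTheorem5:
  fixes m :: nat
  assumes "m \<ge> 1"
  shows "real (card {M. perfect_matching {1..2*m} (path_complement_edges m) M}) =
    (\<Sum>k=0..m. (-1) ^ (m - k) * fact (m + k) / (fact k * fact (m - k) * 2 ^ k))"
proof -
  have "real (card {M. perfect_matching {1..2*m} (path_complement_edges m) M}) = open_matchings_closed 0 m"
    using open_matchings_eq_closed[of 0 m] unfolding card_perfect_matchings_path_complement by simp
  then show ?thesis unfolding open_matchings_closed_0 .
qed

end
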